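(* For every partition $\lambda$, $$F_\lambda\,\mathrm{He}_\lambda(x)=\sum_{j=0}^{\lfloor|\lambda|/2\rfloor}(-1)^j\frac{|\lambda|!}{j!\,(|\lambda|-2j)!\,2^j}\,a(\lambda,j)\,x^{|\lambda|-2j},$$ where $a(\lambda,j)$ is the value of the irreducible character of the symmetric group $S_{|\lambda|}$ associated to $\lambda$ on the conjugacy class of cycle type $(2^j,1^{|\lambda|-2j})$.
   Context: A partition is $\lambda=(\lambda_1\ge\dots\ge\lambda_{\ell(\lambda)}>0)$ with size $|\lambda|=\sum\lambda_i$; degree vector $n_i=\lambda_i+\ell(\lambda)-i$, $\Delta(n_\lambda)=\prod_{i<j}(n_j-n_i)$. Monic Hermite polynomials: $\mathrm{He}_0=1$, $\mathrm{He}_1=x$, $\mathrm{He}_n=x\mathrm{He}_{n-1}-(n-1)\mathrm{He}_{n-2}$. Wronskian Hermite polynomial: $\mathrm{He}_\lambda=\mathrm{Wr}[\mathrm{He}_{n_1},\dots,\mathrm{He}_{n_{\ell(\lambda)}}]/\Delta(n_\lambda)$, $\mathrm{He}_\emptyset=1$. $F_\lambda$ denotes the number of standard Young tableaux of shape $\lambda$. $(2^j,1^{m})$ denotes the cycle type with $j$ cycles of length 2 and $m$ fixed points. *)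

theory Defs
  imports "Jordan_Normal_Form.Determinant" "HOL-Combinatorics.Permutations"
    "HOL-Computational_Algebra.Polynomial" "HOL-Library.FuncSet"
begin

definition is_partition :: "nat list \<Rightarrow> bool" where
  "is_partition lam \<longleftrightarrow> sorted_wrt (\<ge>) lam \<and> (\<forall>x\<in>set lam. 0 < x)"

definition psize :: "nat list \<Rightarrow> nat" where
  "psize lam = sum_list lam"

definition degvec :: "nat list \<Rightarrow> nat \<Rightarrow> nat" where
  "degvec lam i = lam ! i + length lam - 1 - i"

definition Delta :: "nat list \<Rightarrow> int" where
  "Delta lam = (\<Prod>j<length lam. \<Prod>i<j. int (degvec lam j) - int (degvec lam i))"

text \<open>Monic (probabilists') Hermite polynomials.\<close>
fun He :: "nat \<Rightarrow> real poly" where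
  "He 0 = 1"
| "He (Suc 0) = [:0, 1:]"
| "He (Suc (Suc n)) = [:0, 1:] * He (Suc n) - smult (real (Suc n)) (He n)"

definition wronskian :: "real poly list \<Rightarrow> real poly" where
  "wronskian fs = det (mat (length fs) (length fs) (\<lambda>(i, j). (pderiv ^^ i) (fs ! j)))"

definition He_part :: "nat list \<Rightarrow> real poly" where
  "He_part lam = smult (1 / real_of_int (Delta lam))
     (wronskian (map (\<lambda>i. He (degvec lam i)) [0..<length lam]))"

definition cells :: "nat list \<Rightarrow> (nat \<times> nat) set" where
  "cells lam = {(i, j). i < length lam \<and> j < lam ! i}"

definition SYT :: "nat list \<Rightarrow> (nat \<times> nat \<Rightarrow> nat) set" where
  "SYT lam = {T. bij_betw T (cells lam) {1..psize lam}
      \<and> (\<forall>c. c \<notin> cells lam \<longrightarrow> T c = 0)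
      \<and> (\<forall>i j. (i, Suc j) \<in> cells lam \<longrightarrow> T (i, j) < T (i, Suc j))
      \<and> (\<forall>i j. (Suc i, j) \<in> cells lam \<longrightarrow> T (i, j) < T (Suc i, j))}"

definition num_SYT :: "nat list \<Rightarrow> nat" where
  "num_SYT lam = card (SYT lam)"

text \<open>Irreducible character value chi^lambda at cycle type mu (a list of cycle lengths),
  defined by the Frobenius character formula: chi^lambda_mu is the coefficient of
  x^(lambda+delta) in a_delta(x) * prod_k p_(mu_k)(x), with l = length lambda variables,
  delta_i = l-1-i and a_delta = sum_sigma sgn(sigma) x^(sigma delta).  Expanding the
  power sums over maps f assigning each part of mu to a variable gives:\<close>
definition sym_char :: "nat list \<Rightarrow> nat list \<Rightarrow> int" where
  "sym_char lam mu = (let l = length lam; r = length mu in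
     (\<Sum>\<sigma> | \<sigma> permutes {..<l}. sign \<sigma> *
        int (card {f \<in> {..<r} \<rightarrow>\<^sub>E {..<l}.
           \<forall>i<l. (l - 1 - \<sigma> i) + (\<Sum>k | k < r \<and> f k = i. mu ! k) = lam ! i + (l - 1 - i)})))"

definition cyc_type_2_1 :: "nat \<Rightarrow> nat \<Rightarrow> nat list" where
  "cyc_type_2_1 n j = replicate j 2 @ replicate (n - 2 * j) 1"

end

theory Submission
  imports Defs
begin

text \<open>
  Write n = n_lambda, l = length lambda and delta = (l-1, ..., 1, 0). Expanding the Wronskian
  by the Leibniz formula and using He_n' = n He_(n-1), the Wronskian of He_(n_1), ..., He_(n_l)
  becomes, up to the factor sign(rev) * prod_j n_j!, the alternating sum over sigma of the
  products prod_j He_(m_j)/m_j! with m = n - sigma(delta). The same expansion turns Delta(n),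
  a Vandermonde determinant of falling factorials, into the same factor times
  det (1/(n_i - (l-1-j))!), and the latter determinant equals F_lambda/|lambda|! by induction on
  |lambda|: removing a corner of the diagram decrements one n_i, which matches the removal of
  the largest entry of a standard tableau.

  The polynomials He_c/c! are the Taylor coefficients of exp(x t - t^2/2). Accordingly the
  x^a-coefficient of prod_j He_(m_j)/m_j! is (-1/2)^b/(a! b!) times the number of ways to put
  b parts 2 and a parts 1 into the l rows with row sums m: differentiating moves a part 1
  into some row, and at x = 0 the recurrence He_(c+2)(0) = -(c+1) He_c(0) accounts for the
  parts 2. Summed with signs over sigma these counts give, by the Frobenius formula, the
  character value at the class (2^b, 1^a).
\<close>

section \<open>Hermite polynomials\<close>

definition falling_fact :: "real \<Rightarrow> nat \<Rightarrow> real" where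
  "falling_fact x k = (\<Prod>s<k. x - real s)"

lemma falling_fact_0 [simp]: "falling_fact x 0 = 1"
  by (simp add: falling_fact_def)

lemma falling_fact_Suc: "falling_fact x (Suc k) = falling_fact x k * (x - real k)"
  by (simp add: falling_fact_def)

lemma falling_fact_of_nat_eq_0: "n < k \<Longrightarrow> falling_fact (real n) k = 0"
  unfolding falling_fact_def by (rule prod_zero) auto

lemma falling_fact_of_nat: "d \<le> n \<Longrightarrow> falling_fact (real n) d = fact n / fact (n - d)"
proof (induction d)
  case (Suc d)
  have "n - d = Suc (n - Suc d)"
    using Suc.prems by simp
  then have fact_eq: "fact (n - d) = real (n - d) * (fact (n - Suc d) :: real)"
    by (metis fact_Suc of_nat_Suc)
  have "falling_fact (real n) (Suc d) = fact n / fact (n - d) * real (n - d)"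
    using Suc by (simp add: falling_fact_Suc of_nat_diff)
  also have "\<dots> = fact n / fact (n - Suc d)"
    using Suc.prems unfolding fact_eq by (simp add: field_simps)
  finally show ?case .
qed simp

lemma He_pderiv: "pderiv (He (Suc n)) = smult (real (Suc n)) (He n)"
proof (induction n rule: He.induct)
  case 1
  then show ?case by (simp add: pderiv_pCons)
next
  case 2
  then show ?case by (simp add: pderiv_pCons pderiv_mult pderiv_diff numeral_2_eq_2 smult_add_left)
next
  case (3 n)
  let ?c = "real (Suc (Suc n))"
  have "pderiv (He (Suc (Suc (Suc n))))
      = He (Suc (Suc n)) + smult ?c ([:0, 1:] * He (Suc n) - smult (real (Suc n)) (He n))"
    using "3.IH" by (subst He.simps(3))
      (simp add: pderiv_mult pderiv_diff pderiv_pCons pderiv_smult smult_diff_right del: He.simps)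
  also have "\<dots> = smult (1 + ?c) (He (Suc (Suc n)))"
    by (simp only: He.simps(3)[symmetric] smult_add_left smult_1_left)
  finally show ?case by (simp add: add.commute)
qed

lemma He_higher_pderiv: "(pderiv ^^ i) (He n) = smult (falling_fact (real n) i) (He (n - i))"
proof (induction i)
  case (Suc i)
  show ?case
  proof (cases "i < n")
    case True
    define k where "k = n - Suc i"
    have "n - i = Suc k" "real n - real i = real (Suc k)"
      using True by (auto simp: k_def of_nat_diff)
    then show ?thesis
      using Suc by (simp add: pderiv_smult He_pderiv falling_fact_Suc k_def)
  next
    case False
    then show ?thesis
      using Suc by (simp add: pderiv_smult falling_fact_of_nat_eq_0)
  qed
qed simp

definition He_div_fact :: "nat \<Rightarrow> real poly" where
  "He_div_fact c = smult (1 / fact c) (He c)"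

lemma pderiv_He_div_fact: "pderiv (He_div_fact c) = (if c = 0 then 0 else He_div_fact (c - 1))"
proof (cases c)
  case (Suc k)
  have "1 / fact (Suc k) * real (Suc k) = (1 / fact k :: real)"
    by (simp add: divide_simps del: of_nat_Suc)
  then show ?thesis
    using Suc by (simp add: He_div_fact_def pderiv_smult He_pderiv)
qed (simp add: He_div_fact_def)

lemma poly_He_div_fact_0_rec:
  "poly (He_div_fact c) 0 = - real (Suc (Suc c)) * poly (He_div_fact (Suc (Suc c))) 0"
  by (simp add: He_div_fact_def field_simps del: of_nat_Suc)

lemma poly_He_div_fact_0_odd: "odd c \<Longrightarrow> poly (He_div_fact c) 0 = 0"
proof -
  have "poly (He_div_fact (Suc (2 * k))) 0 = 0" for k
    by (induction k) (simp_all add: He_div_fact_def poly_He_div_fact_0_rec[of "Suc (2 * _)"])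
  then show "odd c \<Longrightarrow> ?thesis" by (metis oddE Suc_eq_plus1)
qed

section \<open>Distributing the parts of a cycle type among rows\<close>

definition row_sum :: "(nat \<Rightarrow> nat) \<Rightarrow> nat list \<Rightarrow> nat \<Rightarrow> nat" where
  "row_sum f mu i = (\<Sum>k | k < length mu \<and> f k = i. mu ! k)"

text \<open>
  The map f puts the k-th part of mu into row f k. The number of such maps with row sums m is
  the coefficient of x^m in the power sum product p_mu(x_1, ..., x_l) of the Frobenius formula.
\<close>

definition count_fillings :: "nat \<Rightarrow> nat list \<Rightarrow> (nat \<Rightarrow> nat) \<Rightarrow> nat" where
  "count_fillings l mu m =
     card {f \<in> {..<length mu} \<rightarrow>\<^sub>E {..<l}. \<forall>i<l. row_sum f mu i = m i}"

lemma row_sum_upd_length: "row_sum (f(length mu := y)) mu i = row_sum f mu i"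
  unfolding row_sum_def by (intro sum.cong) auto

lemma row_sum_snoc:
  "row_sum f (mu @ [x]) i = row_sum f mu i + (if f (length mu) = i then x else 0)"
proof -
  let ?r = "length mu"
  have old: "(\<Sum>k | k < ?r \<and> f k = i. (mu @ [x]) ! k) = row_sum f mu i"
    unfolding row_sum_def by (intro sum.cong) (auto simp: nth_append)
  show ?thesis
  proof (cases "f ?r = i")
    case True
    then have "{k. k < length (mu @ [x]) \<and> f k = i} = insert ?r {k. k < ?r \<and> f k = i}"
      by auto
    then show ?thesis
      using True old unfolding row_sum_def by simp
  next
    case False
    then have "{k. k < length (mu @ [x]) \<and> f k = i} = {k. k < ?r \<and> f k = i}"
      by (auto simp: less_Suc_eq)
    then show ?thesis
      using False old unfolding row_sum_def by simp
  qed
qed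

lemma count_fillings_Nil: "count_fillings l [] m = (if \<forall>i<l. m i = 0 then 1 else 0)"
  unfolding count_fillings_def row_sum_def by (simp add: PiE_empty_domain)

lemma card_fillings_last_in_row:
  assumes "i < l" "x \<le> m i"
  shows "card {f \<in> {..<Suc (length mu)} \<rightarrow>\<^sub>E {..<l}.
              (\<forall>i'<l. row_sum f (mu @ [x]) i' = m i') \<and> f (length mu) = i}
       = count_fillings l mu (m(i := m i - x))"
proof -
  let ?r = "length mu"
  let ?S = "{f \<in> {..<Suc ?r} \<rightarrow>\<^sub>E {..<l}. (\<forall>i'<l. row_sum f (mu @ [x]) i' = m i') \<and> f ?r = i}"
  let ?T = "{g \<in> {..<?r} \<rightarrow>\<^sub>E {..<l}. \<forall>i'<l. row_sum g mu i' = (m(i := m i - x)) i'}"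
  have "bij_betw (\<lambda>f. f(?r := undefined)) ?S ?T"
  proof (rule bij_betw_byWitness[where f' = "\<lambda>g. g(?r := i)"])
    show "(\<lambda>f. f(?r := undefined)) ` ?S \<subseteq> ?T"
    proof (rule image_subsetI)
      fix f assume "f \<in> ?S"
      then have f: "f \<in> {..<Suc ?r} \<rightarrow>\<^sub>E {..<l}" "\<forall>i'<l. row_sum f (mu @ [x]) i' = m i'" "f ?r = i"
        by auto
      show "f(?r := undefined) \<in> ?T"
      proof (intro CollectI conjI allI impI)
        show "f(?r := undefined) \<in> {..<?r} \<rightarrow>\<^sub>E {..<l}"
          using f(1) by (auto simp: PiE_def extensional_def)
        fix i' assume "i' < l"
        then show "row_sum (f(?r := undefined)) mu i' = (m(i := m i - x)) i'"
          using f(2)[rule_format, of i'] f(3) assms unfolding row_sum_upd_length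
          by (auto simp: row_sum_snoc)
      qed
    qed
    show "(\<lambda>g. g(?r := i)) ` ?T \<subseteq> ?S"
    proof (rule image_subsetI)
      fix g assume "g \<in> ?T"
      then have g: "g \<in> {..<?r} \<rightarrow>\<^sub>E {..<l}" "\<forall>i'<l. row_sum g mu i' = (m(i := m i - x)) i'"
        by auto
      show "g(?r := i) \<in> ?S"
      proof (intro CollectI conjI allI impI)
        show "g(?r := i) \<in> {..<Suc ?r} \<rightarrow>\<^sub>E {..<l}"
          using g(1) assms by (auto simp: PiE_def extensional_def Pi_iff less_Suc_eq)
        fix i' assume "i' < l"
        then show "row_sum (g(?r := i)) (mu @ [x]) i' = m i'"
          using g(2)[rule_format, of i'] assms by (auto simp: row_sum_snoc row_sum_upd_length)
      qed simp
    qed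
  qed (auto simp: PiE_def extensional_def)
  then show ?thesis
    unfolding count_fillings_def by (rule bij_betw_same_card)
qed

lemma count_fillings_snoc:
  "count_fillings l (mu @ [x]) m = (\<Sum>i | i < l \<and> x \<le> m i. count_fillings l mu (m(i := m i - x)))"
proof -
  let ?r = "length mu"
  define S where "S = {f \<in> {..<Suc ?r} \<rightarrow>\<^sub>E {..<l}. \<forall>i<l. row_sum f (mu @ [x]) i = m i}"
  define I where "I = {i. i < l \<and> x \<le> m i}"
  have cover: "S = (\<Union>i\<in>I. {f \<in> S. f ?r = i})"
  proof (intro equalityI subsetI)
    fix f assume f: "f \<in> S"
    then have "f ?r < l" "row_sum f (mu @ [x]) (f ?r) = m (f ?r)"
      unfolding S_def by auto
    then show "f \<in> (\<Union>i\<in>I. {f \<in> S. f ?r = i})"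
      using f unfolding I_def by (auto simp: row_sum_snoc)
  qed auto
  have "finite S"
    unfolding S_def by (rule finite_subset[of _ "{..<Suc ?r} \<rightarrow>\<^sub>E {..<l}"]) (auto intro: finite_PiE)
  have "card S = card (\<Union>i\<in>I. {f \<in> S. f ?r = i})"
    by (rule arg_cong[where f = card, OF cover])
  also have "\<dots> = (\<Sum>i\<in>I. card {f \<in> S. f ?r = i})"
    by (rule card_UN_disjoint) (use \<open>finite S\<close> in \<open>auto simp: I_def\<close>)
  also have "\<dots> = (\<Sum>i\<in>I. count_fillings l mu (m(i := m i - x)))"
    by (intro sum.cong refl) (auto simp: I_def S_def card_fillings_last_in_row[symmetric] conj_assoc
        intro!: arg_cong[where f = card])
  finally show ?thesis
    unfolding count_fillings_def I_def S_def by simp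
qed

section \<open>Coefficients of products of scaled Hermite polynomials\<close>

definition He_prod :: "nat \<Rightarrow> (nat \<Rightarrow> nat) \<Rightarrow> real poly" where
  "He_prod l m = (\<Prod>i<l. He_div_fact (m i))"

lemma prod_lessThan_fun_upd:
  "i < (l :: nat) \<Longrightarrow> (\<Prod>k<l. f ((m(i := v)) k)) = f v * (\<Prod>k\<in>{..<l} - {i}. f (m k))"
  by (subst prod.remove[of _ i]) (auto intro!: prod.cong)

lemma sum_lessThan_fun_upd:
  "i < (l :: nat) \<Longrightarrow> (\<Sum>k<l. (m(i := v)) k) + m i = (\<Sum>k<l. m k) + (v :: nat)"
proof -
  assume i: "i < l"
  have "(\<Sum>k<l. (m(i := v)) k) = v + (\<Sum>k\<in>{..<l} - {i}. m k)"
    using i by (subst sum.remove[of _ i]) (auto intro!: sum.cong)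
  moreover have "(\<Sum>k<l. m k) = m i + (\<Sum>k\<in>{..<l} - {i}. m k)"
    using i by (subst sum.remove[of _ i]) auto
  ultimately show ?thesis by simp
qed

lemma pderiv_He_prod:
  "pderiv (He_prod l m) = (\<Sum>i<l. if m i = 0 then 0 else He_prod l (m(i := m i - 1)))"
  unfolding He_prod_def pderiv_prod
proof (rule sum.cong)
  fix i assume "i \<in> {..<l}"
  then show "(\<Prod>k\<in>{..<l} - {i}. He_div_fact (m k)) * pderiv (He_div_fact (m i)) =
      (if m i = 0 then 0 else \<Prod>k<l. He_div_fact ((m(i := m i - 1)) k))"
    using prod_lessThan_fun_upd[of i l He_div_fact m "m i - 1"]
    by (simp add: pderiv_He_div_fact mult.commute)
qed simp

lemma count_fillings_twos:
  assumes "(\<Sum>i<l. m i) = 2 * b"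
  shows "real (count_fillings l (replicate b 2) m) = (-2) ^ b * fact b * (\<Prod>i<l. poly (He_div_fact (m i)) 0)"
  using assms
proof (induction b arbitrary: m)
  case 0
  then show ?case by (simp add: count_fillings_Nil He_div_fact_def)
next
  case (Suc b)
  let ?P = "\<Prod>i<l. poly (He_div_fact (m i)) 0"
  define I where "I = {i. i < l \<and> 2 \<le> m i}"
  have removed: "real (count_fillings l (replicate b 2) (m(i := m i - 2))) = (-2) ^ b * fact b * (- real (m i) * ?P)"
    if "i \<in> I" for i
  proof -
    have i: "i < l" "2 \<le> m i" using that by (auto simp: I_def)
    then have "(\<Sum>k<l. (m(i := m i - 2)) k) = 2 * b"
      using Suc.prems sum_lessThan_fun_upd[of i l m "m i - 2"] by simp
    moreover have "Suc (Suc (m i - 2)) = m i"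
      using i by simp
    then have "poly (He_div_fact (m i - 2)) 0 = - real (m i) * poly (He_div_fact (m i)) 0"
      using poly_He_div_fact_0_rec[of "m i - 2"] by (simp only:)
    ultimately show ?thesis
      using i Suc.IH by (simp add: prod_lessThan_fun_upd prod.remove[of _ i])
  qed
  have "replicate (Suc b) (2 :: nat) = replicate b 2 @ [2]"
    by (simp add: replicate_append_same)
  then have "real (count_fillings l (replicate (Suc b) 2) m) =
      (\<Sum>i\<in>I. real (count_fillings l (replicate b 2) (m(i := m i - 2))))"
    by (simp add: count_fillings_snoc I_def)
  also have "\<dots> = (\<Sum>i\<in>I. (-2) ^ b * fact b * (- ?P) * real (m i))"
    by (intro sum.cong) (simp_all add: removed)
  also have "\<dots> = (-2) ^ b * fact b * (- ?P) * (\<Sum>i\<in>I. real (m i))"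
    by (simp add: sum_distrib_left)
  also have "\<dots> = (-2) ^ Suc b * fact (Suc b) * ?P"
  proof (cases "?P = 0")
    case False
    have "m i \<noteq> 1" if "i < l" for i
    proof
      assume "m i = 1"
      then have "?P = 0"
        using that poly_He_div_fact_0_odd[of 1] by (intro prod_zero bexI[of _ i]) auto
      with False show False by simp
    qed
    then have "(\<Sum>i\<in>I. m i) = (\<Sum>i<l. m i)"
      by (intro sum.mono_neutral_left) (auto simp: I_def not_le less_Suc_eq numeral_2_eq_2)
    then have "(\<Sum>i\<in>I. real (m i)) = 2 * real (Suc b)"
      using Suc.prems by (metis of_nat_sum of_nat_mult of_nat_numeral)
    then show ?thesis by (simp add: algebra_simps)
  qed simp
  finally show ?case .
qed

lemma coeff_0_He_prod:
  assumes "(\<Sum>i<l. m i) = N"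
  shows "coeff (He_prod l m) 0 =
    (if even N then (-1/2) ^ (N div 2) / fact (N div 2) * real (count_fillings l (replicate (N div 2) 2) m) else 0)"
proof -
  have coeff_0: "coeff (He_prod l m) 0 = (\<Prod>i<l. poly (He_div_fact (m i)) 0)"
    by (simp add: He_prod_def poly_0_coeff_0[symmetric] poly_prod)
  show ?thesis
  proof (cases "even N")
    case True
    then obtain b where b: "N = 2 * b" by (auto elim: evenE)
    have cancel: "x / F * (y * F * P) = (x * y) * P" if "F \<noteq> 0" for x y F P :: real
      using that by simp
    have "(-1/2) ^ b * (-2) ^ b = (1 :: real)"
      by (simp flip: power_mult_distrib)
    then show ?thesis
      using b assms count_fillings_twos[where b = b] coeff_0 by (simp add: cancel)
  next
    case False
    have "\<exists>i<l. odd (m i)"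
    proof (rule ccontr)
      assume "\<not> (\<exists>i<l. odd (m i))"
      then have "even (\<Sum>i<l. m i)" by (auto intro!: dvd_sum)
      then show False using False assms by simp
    qed
    then show ?thesis
      using False coeff_0 by (auto intro!: prod_zero poly_He_div_fact_0_odd)
  qed
qed

lemma coeff_He_prod:
  assumes "(\<Sum>i<l. m i) = N"
  shows "coeff (He_prod l m) a =
    (if a \<le> N \<and> even (N - a)
     then (-1/2) ^ ((N - a) div 2) / (fact a * fact ((N - a) div 2))
          * real (count_fillings l (replicate ((N - a) div 2) 2 @ replicate a 1) m)
     else 0)"
  using assms
proof (induction a arbitrary: m N)
  case 0
  then show ?case
    by (simp add: coeff_0_He_prod)
next
  case (Suc a)
  let ?b = "(N - Suc a) div 2"
  let ?c = "(-1/2) ^ ?b / (fact a * fact ?b) :: real"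
  let ?mu = "replicate ?b (2::nat) @ replicate a 1"
  have lowered: "(\<Sum>k<l. (m(i := m i - 1)) k) = N - 1" if "i < l" "m i \<noteq> 0" for i
    using sum_lessThan_fun_upd[OF that(1), of m "m i - 1"] that Suc.prems by simp
  have "coeff (He_prod l m) (Suc a) = coeff (pderiv (He_prod l m)) a / real (Suc a)"
    by (simp add: coeff_pderiv del: of_nat_Suc)
  also have "coeff (pderiv (He_prod l m)) a =
      (\<Sum>i<l. if m i = 0 then 0 else coeff (He_prod l (m(i := m i - 1))) a)"
    unfolding pderiv_He_prod coeff_sum by (intro sum.cong) auto
  finally have deriv: "coeff (He_prod l m) (Suc a) =
      (\<Sum>i<l. if m i = 0 then 0 else coeff (He_prod l (m(i := m i - 1))) a) / real (Suc a)" .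
  have IH: "coeff (He_prod l (m(i := m i - 1))) a =
      (if Suc a \<le> N \<and> even (N - Suc a) then ?c * real (count_fillings l ?mu (m(i := m i - 1))) else 0)"
    if "i < l" "m i \<noteq> 0" for i
  proof -
    have "m i \<le> N"
      using that Suc.prems by (metis finite_lessThan lessThan_iff member_le_sum zero_le)
    then have "N - 1 - a = N - Suc a" "(a \<le> N - 1 \<and> even (N - Suc a)) = (Suc a \<le> N \<and> even (N - Suc a))"
      using that by auto
    then show ?thesis
      using Suc.IH[OF lowered[OF that]] by (simp only:)
  qed
  show ?case
  proof (cases "Suc a \<le> N \<and> even (N - Suc a)")
    case True
    have "(\<Sum>i<l. if m i = 0 then 0 else coeff (He_prod l (m(i := m i - 1))) a)
        = (\<Sum>i<l. if m i = 0 then 0 else ?c * real (count_fillings l ?mu (m(i := m i - 1))))"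
      using IH True by (intro sum.cong) auto
    also have "\<dots> = (\<Sum>i | i < l \<and> 1 \<le> m i. ?c * real (count_fillings l ?mu (m(i := m i - 1))))"
      by (rule sum.mono_neutral_cong_right) auto
    also have "\<dots> = ?c * real (count_fillings l (?mu @ [1]) m)"
      unfolding count_fillings_snoc of_nat_sum sum_distrib_left by simp
    finally have "coeff (He_prod l m) (Suc a) = ?c * real (count_fillings l (?mu @ [1]) m) / real (Suc a)"
      unfolding deriv by (rule arg_cong[where f = "\<lambda>x. x / real (Suc a)"])
    moreover have "?mu @ [1] = replicate ?b 2 @ replicate (Suc a) 1"
      by (simp add: replicate_append_same)
    moreover have "?c * x / real (Suc a) = (-1/2) ^ ?b / (fact (Suc a) * fact ?b) * x" for x
      by (simp add: field_simps del: of_nat_Suc)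
    ultimately show ?thesis
      unfolding if_P[OF True] by simp
  next
    case False
    have "coeff (He_prod l (m(i := m i - 1))) a = 0" if "i < l" "m i \<noteq> 0" for i
      using IH[OF that] unfolding if_not_P[OF False] .
    then show ?thesis
      unfolding deriv if_not_P[OF False] by (auto intro!: sum.neutral)
  qed
qed

section \<open>Removing the largest entry of a standard Young tableau\<close>

definition corner :: "nat list \<Rightarrow> nat \<Rightarrow> bool" where
  "corner lam i \<longleftrightarrow> i < length lam \<and> 0 < lam ! i \<and> (Suc i < length lam \<longrightarrow> lam ! Suc i < lam ! i)"

lemma sorted_wrt_ge_nth:
  assumes "sorted_wrt (\<ge>) (lam :: nat list)" "i \<le> j" "j < length lam"
  shows "lam ! j \<le> lam ! i"
  using assms by (cases "i = j") (auto simp: sorted_wrt_iff_nth_less)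

lemma cells_iff: "(a, b) \<in> cells lam \<longleftrightarrow> a < length lam \<and> b < lam ! a"
  unfolding cells_def by simp

lemma cells_above:
  assumes "sorted_wrt (\<ge>) lam" "(Suc a, b) \<in> cells lam"
  shows "(a, b) \<in> cells lam"
  using assms sorted_wrt_ge_nth[OF assms(1), of a "Suc a"] unfolding cells_iff by auto

lemma cells_left: "(a, Suc b) \<in> cells lam \<Longrightarrow> (a, b) \<in> cells lam"
  unfolding cells_iff by auto

lemma finite_cells: "finite (cells lam)"
proof -
  have "cells lam \<subseteq> {..<length lam} \<times> {..<psize lam}"
    unfolding cells_def psize_def using elem_le_sum_list[of _ lam] by fastforce
  then show ?thesis by (rule finite_subset) auto
qed

lemma mem_SYT_iff: "T \<in> SYT lam \<longleftrightarrow> bij_betw T (cells lam) {1..psize lam}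
      \<and> (\<forall>c. c \<notin> cells lam \<longrightarrow> T c = 0)
      \<and> (\<forall>i j. (i, Suc j) \<in> cells lam \<longrightarrow> T (i, j) < T (i, Suc j))
      \<and> (\<forall>i j. (Suc i, j) \<in> cells lam \<longrightarrow> T (i, j) < T (Suc i, j))"
  unfolding SYT_def by simp

lemma finite_SYT: "finite (SYT lam)"
proof (rule finite_subset)
  show "SYT lam \<subseteq> {f. \<forall>x. (x \<in> cells lam \<longrightarrow> f x \<in> {1..psize lam}) \<and> (x \<notin> cells lam \<longrightarrow> f x = 0)}"
  proof
    fix T assume "T \<in> SYT lam"
    then have "bij_betw T (cells lam) {1..psize lam}" "\<forall>c. c \<notin> cells lam \<longrightarrow> T c = 0"
      unfolding mem_SYT_iff by auto
    then show "T \<in> {f. \<forall>x. (x \<in> cells lam \<longrightarrow> f x \<in> {1..psize lam}) \<and> (x \<notin> cells lam \<longrightarrow> f x = 0)}"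
      using bij_betwE by blast
  qed
qed (intro finite_set_of_finite_funs finite_cells finite_atLeastAtMost)

lemma num_SYT_psize_0: "psize lam = 0 \<Longrightarrow> num_SYT lam = 1"
proof -
  assume "psize lam = 0"
  then have "\<forall>i<length lam. lam ! i = 0"
    using elem_le_sum_list[of _ lam] unfolding psize_def by fastforce
  then have "cells lam = {}"
    unfolding cells_def by auto
  then have "SYT lam = {\<lambda>_. 0}"
    using \<open>psize lam = 0\<close> unfolding SYT_def by (auto simp: bij_betw_def)
  then show ?thesis
    unfolding num_SYT_def by simp
qed

lemma cells_remove_corner:
  "corner lam i \<Longrightarrow> cells (lam[i := lam ! i - 1]) = cells lam - {(i, lam ! i - 1)}"
  unfolding cells_def corner_def by (auto simp: nth_list_update split: if_splits)

lemma psize_remove_corner: "corner lam i \<Longrightarrow> psize (lam[i := lam ! i - 1]) = psize lam - 1"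
  unfolding psize_def corner_def by (simp add: sum_list_update)

lemma sorted_remove_corner:
  assumes sorted: "sorted_wrt (\<ge>) lam" and cor: "corner lam i"
  shows "sorted_wrt (\<ge>) (lam[i := lam ! i - 1])"
  unfolding sorted_wrt_iff_nth_less
proof (intro allI impI)
  fix a b assume ab: "a < b" "b < length (lam[i := lam ! i - 1])"
  then have "b < length lam" by simp
  show "lam[i := lam ! i - 1] ! b \<le> lam[i := lam ! i - 1] ! a"
  proof (cases "a = i")
    case True
    then have "lam ! b \<le> lam ! Suc i" "lam ! Suc i < lam ! i"
      using sorted_wrt_ge_nth[OF sorted, of "Suc i" b] cor ab \<open>b < length lam\<close>
      unfolding corner_def by auto
    then show ?thesis
      using True ab by (simp add: nth_list_update_neq)
  next
    case False
    have "lam[i := lam ! i - 1] ! b \<le> lam ! b"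
      using \<open>b < length lam\<close> by (cases "b = i") (simp_all add: nth_list_update_neq)
    then show ?thesis
      using False sorted_wrt_ge_nth[OF sorted, of a b] ab \<open>b < length lam\<close>
      by (simp add: nth_list_update_neq)
  qed
qed

lemma SYT_max_at_corner:
  assumes T: "T \<in> SYT lam" and nonempty: "psize lam \<noteq> 0"
  obtains i where "corner lam i" "T (i, lam ! i - 1) = psize lam"
proof -
  let ?N = "psize lam"
  have bij: "bij_betw T (cells lam) {1..?N}"
    and row: "\<And>i j. (i, Suc j) \<in> cells lam \<Longrightarrow> T (i, j) < T (i, Suc j)"
    and col: "\<And>i j. (Suc i, j) \<in> cells lam \<Longrightarrow> T (i, j) < T (Suc i, j)"
    using T unfolding mem_SYT_iff by auto
  have le: "T x \<le> ?N" if "x \<in> cells lam" for x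
    using bij_betwE[OF bij] that by auto
  have "?N \<in> T ` cells lam"
    using bij nonempty unfolding bij_betw_def by auto
  then obtain a b where ab: "(a, b) \<in> cells lam" "T (a, b) = ?N" by auto
  have "(a, Suc b) \<notin> cells lam"
  proof
    assume "(a, Suc b) \<in> cells lam"
    then have "T (a, b) < T (a, Suc b)" "T (a, Suc b) \<le> ?N"
      using row le by auto
    then show False using ab by simp
  qed
  moreover have "(Suc a, b) \<notin> cells lam"
  proof
    assume "(Suc a, b) \<in> cells lam"
    then have "T (a, b) < T (Suc a, b)" "T (Suc a, b) \<le> ?N"
      using col le by auto
    then show False using ab by simp
  qed
  ultimately have "b = lam ! a - 1" "corner lam a"
    using ab(1) unfolding cells_iff corner_def by auto
  with ab show thesis by (intro that) auto
qed

lemma psize_nonzero_if_corner: "corner lam i \<Longrightarrow> psize lam \<noteq> 0"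
  using elem_le_sum_list[of i lam] unfolding corner_def psize_def by auto

lemma bij_betw_fun_upd_delete:
  fixes T :: "'a \<Rightarrow> nat"
  assumes bij: "bij_betw T A {1..N}" and c: "c \<in> A" "T c = N"
  shows "bij_betw (T(c := 0)) (A - {c}) {1..N - 1}"
proof -
  have "T c \<in> {1..N}"
    using bij_betwE[OF bij] c(1) by blast
  then have "N \<noteq> 0"
    using c(2) by simp
  have "bij_betw T (A - {c}) ({1..N} - {N})"
    by (rule bij_betw_DiffI[OF bij]) (use c \<open>N \<noteq> 0\<close> in auto)
  moreover have "{1..N} - {N} = {1..N - 1}"
    using \<open>N \<noteq> 0\<close> by (cases N) auto
  ultimately have "bij_betw T (A - {c}) {1..N - 1}"
    by simp
  then show ?thesis
    by (rule bij_betw_cong[THEN iffD1, rotated]) auto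
qed

lemma bij_betw_fun_upd_insert:
  fixes T :: "'a \<Rightarrow> nat"
  assumes bij: "bij_betw T A {1..N - 1}" and c: "c \<notin> A" and "N \<noteq> 0"
  shows "bij_betw (T(c := N)) (insert c A) {1..N}"
proof -
  have bij': "bij_betw (T(c := N)) A {1..N - 1}"
    using bij by (rule bij_betw_cong[THEN iffD1, rotated]) (use c in auto)
  have "N - 1 < N"
    using \<open>N \<noteq> 0\<close> by simp
  then have "(T(c := N)) c \<notin> {1..N - 1}"
    by simp
  then have "bij_betw (T(c := N)) (A \<union> {c}) ({1..N - 1} \<union> {(T(c := N)) c})"
    by (rule notIn_Un_bij_betw[OF c _ bij'])
  moreover have "{1..N - 1} \<union> {(T(c := N)) c} = {1..N}"
    using \<open>N \<noteq> 0\<close> by (cases N) auto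
  ultimately show ?thesis
    by simp
qed

lemma SYT_remove_max:
  assumes sorted: "sorted_wrt (\<ge>) lam" and cor: "corner lam i"
    and T: "T \<in> SYT lam" and max: "T (i, lam ! i - 1) = psize lam"
  shows "T((i, lam ! i - 1) := 0) \<in> SYT (lam[i := lam ! i - 1])"
proof -
  define c where "c = (i, lam ! i - 1)"
  define lam' where "lam' = lam[i := lam ! i - 1]"
  define N where "N = psize lam"
  have cells': "cells lam' = cells lam - {c}"
    unfolding lam'_def c_def using cor by (rule cells_remove_corner)
  have "c \<in> cells lam"
    using cor unfolding corner_def cells_iff c_def by auto
  have N': "psize lam' = N - 1"
    unfolding lam'_def N_def using cor by (rule psize_remove_corner)
  have bij: "bij_betw T (cells lam) {1..N}" and zero: "\<And>x. x \<notin> cells lam \<Longrightarrow> T x = 0"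
    and row: "\<And>i j. (i, Suc j) \<in> cells lam \<Longrightarrow> T (i, j) < T (i, Suc j)"
    and col: "\<And>i j. (Suc i, j) \<in> cells lam \<Longrightarrow> T (i, j) < T (Suc i, j)"
    using T unfolding mem_SYT_iff N_def by auto
  have "bij_betw (T(c := 0)) (cells lam') {1..psize lam'}"
    unfolding cells' N' using bij_betw_fun_upd_delete[OF bij \<open>c \<in> cells lam\<close>] max
    unfolding c_def N_def by simp
  moreover have "(T(c := 0)) (a, b) < (T(c := 0)) (a, Suc b)" if "(a, Suc b) \<in> cells lam'" for a b
  proof -
    have "(a, b) \<in> cells lam'"
      using that by (rule cells_left)
    then show ?thesis
      using that cells' row by auto
  qed
  moreover have "(T(c := 0)) (a, b) < (T(c := 0)) (Suc a, b)" if "(Suc a, b) \<in> cells lam'" for a b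
  proof -
    have "(a, b) \<in> cells lam'"
      using cells_above[OF sorted_remove_corner[OF sorted cor]] that unfolding lam'_def by blast
    then show ?thesis
      using that cells' col by auto
  qed
  ultimately have "T(c := 0) \<in> SYT lam'"
    unfolding mem_SYT_iff using cells' zero by auto
  then show ?thesis
    unfolding c_def lam'_def .
qed

lemma SYT_add_max:
  assumes sorted: "sorted_wrt (\<ge>) lam" and cor: "corner lam i"
    and T: "T \<in> SYT (lam[i := lam ! i - 1])"
  shows "T((i, lam ! i - 1) := psize lam) \<in> SYT lam"
proof -
  define c where "c = (i, lam ! i - 1)"
  define lam' where "lam' = lam[i := lam ! i - 1]"
  define N where "N = psize lam"
  define T' where "T' = T(c := N)"
  have cells': "cells lam' = cells lam - {c}"
    unfolding lam'_def c_def using cor by (rule cells_remove_corner)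
  have "c \<in> cells lam" "N \<noteq> 0"
    using cor psize_nonzero_if_corner[OF cor] unfolding corner_def cells_iff c_def N_def by auto
  have N': "psize lam' = N - 1"
    unfolding lam'_def N_def using cor by (rule psize_remove_corner)
  have not_after_c: "(i, lam ! i) \<notin> cells lam" "(Suc i, lam ! i - 1) \<notin> cells lam"
    using cor unfolding corner_def cells_iff by auto
  have bij: "bij_betw T (cells lam') {1..N - 1}" and zero: "\<And>x. x \<notin> cells lam' \<Longrightarrow> T x = 0"
    and row: "\<And>i j. (i, Suc j) \<in> cells lam' \<Longrightarrow> T (i, j) < T (i, Suc j)"
    and col: "\<And>i j. (Suc i, j) \<in> cells lam' \<Longrightarrow> T (i, j) < T (Suc i, j)"
    using T unfolding mem_SYT_iff N' lam'_def[symmetric] by auto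
  have T'_c: "T' c = N" and T'_other: "x \<noteq> c \<Longrightarrow> T' x = T x" for x
    unfolding T'_def by auto
  have below_N: "T' x < N" if "x \<in> cells lam'" for x
  proof -
    have "T x \<le> N - 1" "x \<noteq> c"
      using bij_betwE[OF bij] that cells' by auto
    then show ?thesis
      using \<open>N \<noteq> 0\<close> T'_other by fastforce
  qed
  have "bij_betw T' (insert c (cells lam')) {1..N}"
    unfolding T'_def by (rule bij_betw_fun_upd_insert[OF bij]) (simp_all add: cells' \<open>N \<noteq> 0\<close>)
  then have "bij_betw T' (cells lam) {1..N}"
    using cells' \<open>c \<in> cells lam\<close> by (simp add: insert_absorb)
  moreover have "T' (a, b) < T' (a, Suc b)" if "(a, Suc b) \<in> cells lam" for a b
  proof (cases "(a, Suc b) = c")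
    case True
    then have "(a, b) \<in> cells lam'"
      using cells' cells_left[OF that] unfolding c_def by auto
    then show ?thesis
      using True T'_c below_N by simp
  next
    case False
    moreover have "(a, b) \<noteq> c"
      using that not_after_c unfolding c_def by (auto simp: cells_iff)
    ultimately show ?thesis
      using row[of a b] that cells' T'_other by simp
  qed
  moreover have "T' (a, b) < T' (Suc a, b)" if "(Suc a, b) \<in> cells lam" for a b
  proof (cases "(Suc a, b) = c")
    case True
    then have "(a, b) \<in> cells lam'"
      using cells' cells_above[OF sorted that] unfolding c_def by auto
    then show ?thesis
      using True T'_c below_N by simp
  next
    case False
    moreover have "(a, b) \<noteq> c"
      using that not_after_c unfolding c_def by auto
    ultimately show ?thesis
      using col[of a b] that cells' T'_other by simp
  qed
  moreover have "T' x = 0" if "x \<notin> cells lam" for x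
    using that zero[of x] cells' T'_other[of x] \<open>c \<in> cells lam\<close> by auto
  ultimately have "T' \<in> SYT lam"
    unfolding mem_SYT_iff N_def[symmetric] by blast
  then show ?thesis
    unfolding T'_def c_def N_def .
qed

lemma card_SYT_max_at_corner:
  assumes "sorted_wrt (\<ge>) lam" "corner lam i"
  shows "card {T \<in> SYT lam. T (i, lam ! i - 1) = psize lam} = num_SYT (lam[i := lam ! i - 1])"
  unfolding num_SYT_def
proof (rule bij_betw_same_card[of "\<lambda>T. T((i, lam ! i - 1) := 0)"],
       rule bij_betw_byWitness[where f' = "\<lambda>T. T((i, lam ! i - 1) := psize lam)"])
  have "T (i, lam ! i - 1) = 0" if "T \<in> SYT (lam[i := lam ! i - 1])" for T
    using that cells_remove_corner[OF assms(2)] unfolding mem_SYT_iff by blast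
  then show "\<forall>T\<in>SYT (lam[i := lam ! i - 1]). T((i, lam ! i - 1) := psize lam, (i, lam ! i - 1) := 0) = T"
    by auto
  show "(\<lambda>T. T((i, lam ! i - 1) := 0)) ` {T \<in> SYT lam. T (i, lam ! i - 1) = psize lam}
      \<subseteq> SYT (lam[i := lam ! i - 1])"
    using SYT_remove_max[OF assms] by blast
  show "(\<lambda>T. T((i, lam ! i - 1) := psize lam)) ` SYT (lam[i := lam ! i - 1])
      \<subseteq> {T \<in> SYT lam. T (i, lam ! i - 1) = psize lam}"
    using SYT_add_max[OF assms] by (simp add: image_subset_iff)
qed auto

lemma num_SYT_rec:
  assumes sorted: "sorted_wrt (\<ge>) lam" and nonempty: "psize lam \<noteq> 0"
  shows "num_SYT lam = (\<Sum>i | corner lam i. num_SYT (lam[i := lam ! i - 1]))"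
proof -
  let ?A = "\<lambda>i. {T \<in> SYT lam. T (i, lam ! i - 1) = psize lam}"
  have cover: "SYT lam = (\<Union>i\<in>{i. corner lam i}. ?A i)"
  proof (intro equalityI subsetI)
    fix T assume "T \<in> SYT lam"
    then obtain i where "corner lam i" "T (i, lam ! i - 1) = psize lam"
      using nonempty by (rule SYT_max_at_corner)
    with \<open>T \<in> SYT lam\<close> show "T \<in> (\<Union>i\<in>{i. corner lam i}. ?A i)"
      by blast
  qed auto
  have disjoint: "?A i \<inter> ?A j = {}" if "corner lam i" "corner lam j" "i \<noteq> j" for i j
  proof -
    have "(i, lam ! i - 1) \<in> cells lam" "(j, lam ! j - 1) \<in> cells lam"
      using that unfolding corner_def cells_iff by auto
    moreover have "(i, lam ! i - 1) = (j, lam ! j - 1)" if "T \<in> ?A i" "T \<in> ?A j" for T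
    proof -
      from that have "inj_on T (cells lam)" "T (i, lam ! i - 1) = T (j, lam ! j - 1)"
        unfolding mem_SYT_iff bij_betw_def by auto
      with calculation show ?thesis by (blast dest: inj_onD)
    qed
    ultimately show ?thesis
      using \<open>i \<noteq> j\<close> by blast
  qed
  have "finite {i. corner lam i}"
    unfolding corner_def by (rule finite_subset[of _ "{..<length lam}"]) auto
  have "num_SYT lam = card (\<Union>i\<in>{i. corner lam i}. ?A i)"
    unfolding num_SYT_def by (rule arg_cong[where f = card, OF cover])
  also have "\<dots> = (\<Sum>i | corner lam i. card (?A i))"
    by (rule card_UN_disjoint)
      (use \<open>finite {i. corner lam i}\<close> in simp, simp add: finite_SYT, use disjoint in blast)
  also have "\<dots> = (\<Sum>i | corner lam i. num_SYT (lam[i := lam ! i - 1]))"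
    using card_SYT_max_at_corner[OF sorted] by simp
  finally show ?thesis .
qed

section \<open>The determinant formula for the number of standard Young tableaux\<close>

definition inv_fact :: "int \<Rightarrow> real" where
  "inv_fact k = (if k < 0 then 0 else 1 / fact (nat k))"

lemma inv_fact_neg: "k < 0 \<Longrightarrow> inv_fact k = 0"
  by (simp add: inv_fact_def)

lemma inv_fact_diff_1: "inv_fact (k - 1) = real_of_int k * inv_fact k"
proof (cases "k < 1")
  case True
  then show ?thesis by (cases "k = 0") (auto simp: inv_fact_def)
next
  case False
  define n where "n = nat (k - 1)"
  have n: "k = int (Suc n)"
    using False unfolding n_def by simp
  then have "nat (k - 1) = n" "nat k = Suc n" by auto
  then show ?thesis
    using n unfolding inv_fact_def by (simp add: divide_simps del: of_nat_Suc)
qed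

text \<open>
  The determinant det (1/(x_i - (l-1-j))!) over i, j < l, where 1/k! is read as 0 for k < 0.
\<close>

definition inv_fact_det :: "nat \<Rightarrow> (nat \<Rightarrow> int) \<Rightarrow> real" where
  "inv_fact_det l x = (\<Sum>\<sigma> | \<sigma> permutes {..<l}.
     real_of_int (sign \<sigma>) * (\<Prod>i<l. inv_fact (x i - int (l - 1 - \<sigma> i))))"

lemma inv_fact_det_cong: "(\<And>i. i < l \<Longrightarrow> x i = y i) \<Longrightarrow> inv_fact_det l x = inv_fact_det l y"
  unfolding inv_fact_det_def by (intro sum.cong refl arg_cong2[where f = "(*)"] prod.cong) auto

lemma inv_fact_det_eq_0_if_neg: "i < l \<Longrightarrow> x i < 0 \<Longrightarrow> inv_fact_det l x = 0"
  unfolding inv_fact_det_def by (intro sum.neutral ballI) (auto intro!: prod_zero bexI[of _ i] inv_fact_neg)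

lemma inv_fact_det_eq_0_if_eq:
  assumes ij: "i < l" "j < l" "i \<noteq> j" and eq: "x i = x j"
  shows "inv_fact_det l x = 0"
proof -
  define t where "t = Transposition.transpose i j"
  have t: "t permutes {..<l}"
    unfolding t_def using ij by (intro permutes_swap_id) auto
  define g where "g \<sigma> = real_of_int (sign \<sigma>) * (\<Prod>k<l. inv_fact (x k - int (l - 1 - \<sigma> k)))"
    for \<sigma> :: "nat \<Rightarrow> nat"
  have flip: "g (\<sigma> \<circ> t) = - g \<sigma>" if \<sigma>: "\<sigma> permutes {..<l}" for \<sigma>
  proof -
    have "permutation \<sigma>" "permutation t"
      using \<sigma> t by (auto simp: permutation_permutes)
    then have sign: "sign (\<sigma> \<circ> t) = - sign \<sigma>"
      using ij unfolding t_def by (simp add: sign_compose sign_swap_id)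
    have "x (t k) = x k" for k
      unfolding t_def using eq by (auto simp: Transposition.transpose_def)
    then have "(\<Prod>k<l. inv_fact (x k - int (l - 1 - \<sigma> (t k))))
        = (\<Prod>k<l. inv_fact (x (t k) - int (l - 1 - \<sigma> (t k))))"
      by simp
    also have "\<dots> = (\<Prod>k<l. inv_fact (x k - int (l - 1 - \<sigma> k)))"
      using prod.permute[OF t, of "\<lambda>k. inv_fact (x k - int (l - 1 - \<sigma> k))"] by (simp add: comp_def)
    finally show ?thesis
      unfolding g_def sign by simp
  qed
  have "inv_fact_det l x = (\<Sum>\<sigma> | \<sigma> permutes {..<l}. g (\<sigma> \<circ> t))"
    unfolding inv_fact_det_def g_def[symmetric] by (rule sum_permutations_compose_right[OF t])
  also have "\<dots> = - inv_fact_det l x"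
    unfolding inv_fact_det_def g_def[symmetric] by (simp add: flip sum_negf)
  finally show ?thesis by simp
qed

lemma permutes_lessThan_ge_id:
  assumes p: "\<sigma> permutes {..<(l :: nat)}" and ge: "\<And>i. i < l \<Longrightarrow> i \<le> \<sigma> i"
  shows "\<sigma> = id"
proof -
  have eq: "\<sigma> i = i" if "i < l" for i
  proof (rule ccontr)
    assume "\<sigma> i \<noteq> i"
    then have "i < \<sigma> i"
      using ge[OF that] by simp
    then have "(\<Sum>k<l. k) < (\<Sum>k<l. \<sigma> k)"
      using ge that by (intro sum_strict_mono_ex1) auto
    moreover have "(\<Sum>k<l. \<sigma> k) = (\<Sum>k<l. k)"
      using sum.permute[OF p, of id] by (simp add: comp_def)
    ultimately show False by simp
  qed
  show ?thesis
  proof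
    fix i
    show "\<sigma> i = id i"
      by (cases "i < l") (auto simp: eq permutes_not_in[OF p])
  qed
qed

lemma inv_fact_det_staircase: "inv_fact_det l (\<lambda>i. int (l - 1 - i)) = 1"
proof -
  have vanish: "real_of_int (sign \<sigma>) * (\<Prod>i<l. inv_fact (int (l - 1 - i) - int (l - 1 - \<sigma> i))) = 0"
    if \<sigma>: "\<sigma> permutes {..<l}" and not_id: "\<sigma> \<noteq> id" for \<sigma>
  proof -
    obtain i where i: "i < l" "\<sigma> i < i"
      using permutes_lessThan_ge_id[OF \<sigma>] not_id by (meson not_le)
    moreover have "\<sigma> i < l"
      using i permutes_in_image[OF \<sigma>] by auto
    ultimately have "int (l - 1 - i) - int (l - 1 - \<sigma> i) < 0"
      by linarith
    then show ?thesis
      using i by (auto intro!: prod_zero bexI[of _ i] inv_fact_neg)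
  qed
  let ?f = "\<lambda>\<sigma>. real_of_int (sign \<sigma>) * (\<Prod>i<l. inv_fact (int (l - 1 - i) - int (l - 1 - \<sigma> i)))"
  have fin: "finite {\<sigma>. \<sigma> permutes {..<l}}" and id: "id \<in> {\<sigma>. \<sigma> permutes {..<l}}"
    by (simp_all add: finite_permutations permutes_id)
  have "inv_fact_det l (\<lambda>i. int (l - 1 - i)) = ?f id + (\<Sum>\<sigma> \<in> {\<sigma>. \<sigma> permutes {..<l}} - {id}. ?f \<sigma>)"
    unfolding inv_fact_det_def by (rule sum.remove[OF fin id])
  also have "(\<Sum>\<sigma> \<in> {\<sigma>. \<sigma> permutes {..<l}} - {id}. ?f \<sigma>) = 0"
    by (intro sum.neutral ballI vanish) auto
  also have "?f id = 1"
    by (simp add: inv_fact_def)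
  finally show ?thesis
    by simp
qed

lemma sum_inv_fact_det_decrements:
  "(\<Sum>i<l. inv_fact_det l (x(i := x i - 1))) = real_of_int (\<Sum>i<l. x i - int (l - 1 - i)) * inv_fact_det l x"
proof -
  define d where "d \<sigma> i = int (l - 1 - \<sigma> i)" for \<sigma> :: "nat \<Rightarrow> nat" and i
  define Q where "Q \<sigma> = (\<Prod>k<l. inv_fact (x k - d \<sigma> k))" for \<sigma>
  have decrement: "(\<Prod>k<l. inv_fact ((x(i := x i - 1)) k - d \<sigma> k)) = real_of_int (x i - d \<sigma> i) * Q \<sigma>"
    if "i < l" for i \<sigma>
  proof -
    have "(\<Prod>k<l. inv_fact ((x(i := x i - 1)) k - d \<sigma> k))
        = inv_fact (x i - 1 - d \<sigma> i) * (\<Prod>k\<in>{..<l} - {i}. inv_fact (x k - d \<sigma> k))"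
      using that by (subst prod.remove[of _ i]) (auto intro!: prod.cong)
    also have "inv_fact (x i - 1 - d \<sigma> i) = real_of_int (x i - d \<sigma> i) * inv_fact (x i - d \<sigma> i)"
      using inv_fact_diff_1[of "x i - d \<sigma> i"] by (simp add: algebra_simps)
    also have "Q \<sigma> = inv_fact (x i - d \<sigma> i) * (\<Prod>k\<in>{..<l} - {i}. inv_fact (x k - d \<sigma> k))"
      unfolding Q_def using that by (subst prod.remove[of _ i]) auto
    ultimately show ?thesis by simp
  qed
  have sum_d: "(\<Sum>i<l. d \<sigma> i) = (\<Sum>i<l. int (l - 1 - i))" if "\<sigma> permutes {..<l}" for \<sigma>
    unfolding d_def using sum.permute[OF that, of "\<lambda>j. int (l - 1 - j)"] by (simp add: comp_def)
  have "(\<Sum>i<l. inv_fact_det l (x(i := x i - 1)))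
      = (\<Sum>i<l. \<Sum>\<sigma> | \<sigma> permutes {..<l}. real_of_int (sign \<sigma>) * (real_of_int (x i - d \<sigma> i) * Q \<sigma>))"
    unfolding inv_fact_det_def d_def[symmetric]
  proof (intro sum.cong refl)
    fix i \<sigma> assume "i \<in> {..<l}"
    then show "real_of_int (sign \<sigma>) * (\<Prod>k<l. inv_fact ((x(i := x i - 1)) k - d \<sigma> k))
        = real_of_int (sign \<sigma>) * (real_of_int (x i - d \<sigma> i) * Q \<sigma>)"
      using decrement[of i \<sigma>] by simp
  qed
  also have "\<dots> = (\<Sum>\<sigma> | \<sigma> permutes {..<l}. \<Sum>i<l. real_of_int (sign \<sigma>) * (real_of_int (x i - d \<sigma> i) * Q \<sigma>))"
    by (rule sum.swap)
  also have "\<dots> = (\<Sum>\<sigma> | \<sigma> permutes {..<l}. real_of_int (sign \<sigma>) * Q \<sigma> * real_of_int (\<Sum>i<l. x i - d \<sigma> i))"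
    by (simp add: sum_distrib_left sum_distrib_right mult_ac)
  also have "\<dots> = (\<Sum>\<sigma> | \<sigma> permutes {..<l}. real_of_int (sign \<sigma>) * Q \<sigma> * real_of_int (\<Sum>i<l. x i - int (l - 1 - i)))"
    by (intro sum.cong refl) (simp add: sum_subtractf sum_d)
  also have "\<dots> = real_of_int (\<Sum>i<l. x i - int (l - 1 - i)) * inv_fact_det l x"
    unfolding inv_fact_det_def Q_def d_def by (simp add: sum_distrib_left mult_ac)
  finally show ?thesis .
qed

lemma int_degvec: "i < length lam \<Longrightarrow> int (degvec lam i) = int (lam ! i) + int (length lam - 1 - i)"
  unfolding degvec_def by simp

lemma sum_degvec: "(\<Sum>i<length lam. degvec lam i) = psize lam + (\<Sum>i<length lam. length lam - 1 - i)"
proof -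
  have "(\<Sum>i<length lam. degvec lam i) = (\<Sum>i<length lam. lam ! i + (length lam - 1 - i))"
    by (intro sum.cong) (auto simp: degvec_def)
  also have "\<dots> = (\<Sum>i<length lam. lam ! i) + (\<Sum>i<length lam. length lam - 1 - i)"
    by (rule sum.distrib)
  also have "(\<Sum>i<length lam. lam ! i) = psize lam"
    by (simp add: psize_def sum_list_sum_nth atLeast0LessThan)
  finally show ?thesis .
qed

lemma degvec_remove_corner:
  assumes "corner lam i" "k < length lam"
  shows "int (degvec (lam[i := lam ! i - 1]) k) = ((\<lambda>k. int (degvec lam k))(i := int (degvec lam i) - 1)) k"
  using assms by (cases "k = i") (auto simp: int_degvec corner_def degvec_def)

lemma inv_fact_det_degvec_non_corner:
  assumes sorted: "sorted_wrt (\<ge>) lam" and i: "i < length lam" and not_corner: "\<not> corner lam i"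
  shows "inv_fact_det (length lam) ((\<lambda>k. int (degvec lam k))(i := int (degvec lam i) - 1)) = 0"
proof (cases "Suc i < length lam \<and> lam ! Suc i = lam ! i")
  case True
  then show ?thesis
    using i by (intro inv_fact_det_eq_0_if_eq[of i _ "Suc i"]) (auto simp: int_degvec)
next
  case False
  have "\<not> Suc i < length lam"
  proof
    assume "Suc i < length lam"
    then have "lam ! Suc i < lam ! i"
      using sorted_wrt_ge_nth[OF sorted, of i "Suc i"] False by simp
    then show False
      using not_corner i unfolding corner_def by simp
  qed
  then have "lam ! i = 0 \<and> Suc i = length lam"
    using not_corner i unfolding corner_def by simp
  then show ?thesis
    using i by (intro inv_fact_det_eq_0_if_neg[of i]) (auto simp: int_degvec)
qed

theorem num_SYT_eq_inv_fact_det: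
  assumes "sorted_wrt (\<ge>) lam"
  shows "real (num_SYT lam) = fact (psize lam) * inv_fact_det (length lam) (\<lambda>i. int (degvec lam i))"
  using assms
proof (induction "psize lam" arbitrary: lam)
  case 0
  then have "lam ! i = 0" if "i < length lam" for i
    using that elem_le_sum_list[of i lam] unfolding psize_def by simp
  then have "inv_fact_det (length lam) (\<lambda>i. int (degvec lam i))
      = inv_fact_det (length lam) (\<lambda>i. int (length lam - 1 - i))"
    by (intro inv_fact_det_cong) (simp add: int_degvec)
  also have "\<dots> = 1"
    by (rule inv_fact_det_staircase)
  finally show ?case
    using num_SYT_psize_0 "0.hyps" by simp
next
  case (Suc N)
  define l where "l = length lam"
  define x where "x = (\<lambda>i. int (degvec lam i))"
  have "int (\<Sum>i<l. degvec lam i) = int (Suc N) + int (\<Sum>i<l. l - 1 - i)"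
    using sum_degvec[of lam] Suc.hyps(2) unfolding l_def by simp
  then have "(\<Sum>i<l. x i) - (\<Sum>i<l. int (l - 1 - i)) = int (Suc N)"
    unfolding x_def of_nat_sum by simp
  then have sum_x: "real_of_int (\<Sum>i<l. x i - int (l - 1 - i)) = real (Suc N)"
    unfolding sum_subtractf by simp
  have "real (num_SYT lam) = (\<Sum>i | corner lam i. real (num_SYT (lam[i := lam ! i - 1])))"
    using num_SYT_rec[OF Suc.prems] Suc.hyps(2) by simp
  also have "\<dots> = (\<Sum>i | corner lam i. fact N * inv_fact_det l (x(i := x i - 1)))"
  proof (intro sum.cong refl)
    fix i assume "i \<in> {i. corner lam i}"
    then have cor: "corner lam i" by simp
    have N: "N = psize (lam[i := lam ! i - 1])"
      using psize_remove_corner[OF cor] Suc.hyps(2) by simp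
    have "real (num_SYT (lam[i := lam ! i - 1])) = fact (psize (lam[i := lam ! i - 1])) *
        inv_fact_det (length (lam[i := lam ! i - 1])) (\<lambda>k. int (degvec (lam[i := lam ! i - 1]) k))"
      by (rule Suc.hyps(1)[OF N sorted_remove_corner[OF Suc.prems cor]])
    moreover have "inv_fact_det (length (lam[i := lam ! i - 1])) (\<lambda>k. int (degvec (lam[i := lam ! i - 1]) k))
        = inv_fact_det l (x(i := x i - 1))"
      unfolding l_def x_def length_list_update by (rule inv_fact_det_cong, rule degvec_remove_corner[OF cor])
    ultimately show "real (num_SYT (lam[i := lam ! i - 1])) = fact N * inv_fact_det l (x(i := x i - 1))"
      unfolding N by (simp only:)
  qed
  also have "\<dots> = (\<Sum>i<l. fact N * inv_fact_det l (x(i := x i - 1)))"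
    by (rule sum.mono_neutral_left)
      (use inv_fact_det_degvec_non_corner[OF Suc.prems] in \<open>auto simp: corner_def l_def x_def\<close>)
  also have "\<dots> = fact N * (real_of_int (\<Sum>i<l. x i - int (l - 1 - i)) * inv_fact_det l x)"
    by (simp add: sum_distrib_left[symmetric] sum_inv_fact_det_decrements)
  also have "real_of_int (\<Sum>i<l. x i - int (l - 1 - i)) = real (Suc N)"
    by (rule sum_x)
  finally show ?case
    unfolding Suc.hyps(2)[symmetric] l_def x_def by (simp add: algebra_simps)
qed

section \<open>Leibniz expansion and the falling factorial Vandermonde determinant\<close>

lemma det_mat_leibniz:
  fixes f :: "nat \<times> nat \<Rightarrow> 'a :: comm_ring_1"
  shows "det (mat l l f) = (\<Sum>p | p permutes {..<l}. of_int (sign p) * (\<Prod>i<l. f (i, p i)))"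
proof -
  have "det (mat l l f) = (\<Sum>p | p permutes {0..<l}. of_int (sign p) * (\<Prod>i=0..<l. mat l l f $$ (i, p i)))"
    by (rule det_def') simp
  also have "\<dots> = (\<Sum>p | p permutes {..<l}. of_int (sign p) * (\<Prod>i<l. f (i, p i)))"
    unfolding atLeast0LessThan
  proof (intro sum.cong refl arg_cong2[where f = "(*)"] prod.cong)
    fix p i assume "p \<in> {p. p permutes {..<l}}" "i \<in> {..<l}"
    then show "mat l l f $$ (i, p i) = f (i, p i)"
      using permutes_in_image by fastforce
  qed
  finally show ?thesis .
qed

lemma det_mat_leibniz_columns:
  fixes f :: "nat \<times> nat \<Rightarrow> 'a :: comm_ring_1"
  shows "det (mat l l f) = (\<Sum>p | p permutes {..<l}. of_int (sign p) * (\<Prod>j<l. f (p j, j)))"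
proof -
  have "transpose_mat (mat l l f) = mat l l (\<lambda>(i, j). f (j, i))"
    by (rule eq_matI) auto
  then have "det (mat l l f) = det (mat l l (\<lambda>(i, j). f (j, i)))"
    using det_transpose[of "mat l l f" l] by simp
  then show ?thesis
    by (simp add: det_mat_leibniz)
qed

definition rev_perm :: "nat \<Rightarrow> nat \<Rightarrow> nat" where
  "rev_perm l j = (if j < l then l - 1 - j else j)"

lemma rev_perm_permutes: "rev_perm l permutes {..<l}"
proof -
  have "bij_betw (rev_perm l) {..<l} {..<l}"
    by (rule bij_betw_byWitness[where f' = "rev_perm l"]) (auto simp: rev_perm_def)
  then show ?thesis
    by (intro bij_imp_permutes) (auto simp: rev_perm_def)
qed

lemma sum_permutes_rev_perm_comp:
  fixes G :: "(nat \<Rightarrow> nat) \<Rightarrow> 'a :: comm_ring_1"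
  shows "(\<Sum>p | p permutes {..<l}. of_int (sign p) * G p)
     = of_int (sign (rev_perm l)) * (\<Sum>\<sigma> | \<sigma> permutes {..<l}. of_int (sign \<sigma>) * G (rev_perm l \<circ> \<sigma>))"
proof -
  have "(\<Sum>p | p permutes {..<l}. of_int (sign p) * G p)
      = (\<Sum>\<sigma> | \<sigma> permutes {..<l}. of_int (sign (rev_perm l \<circ> \<sigma>)) * G (rev_perm l \<circ> \<sigma>))"
    by (rule setum_permutations_compose_left[OF rev_perm_permutes])
  also have "\<dots> = (\<Sum>\<sigma> | \<sigma> permutes {..<l}. of_int (sign (rev_perm l)) * (of_int (sign \<sigma>) * G (rev_perm l \<circ> \<sigma>)))"
  proof (intro sum.cong refl)
    fix \<sigma> assume "\<sigma> \<in> {\<sigma>. \<sigma> permutes {..<l}}"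
    then have "permutation \<sigma>" "permutation (rev_perm l)"
      using rev_perm_permutes by (auto simp: permutation_permutes)
    then show "of_int (sign (rev_perm l \<circ> \<sigma>)) * G (rev_perm l \<circ> \<sigma>)
        = of_int (sign (rev_perm l)) * (of_int (sign \<sigma>) * G (rev_perm l \<circ> \<sigma>))"
      by (simp add: sign_compose)
  qed
  finally show ?thesis
    by (simp add: sum_distrib_left)
qed

lemma rev_perm_permutes_apply: "j < l \<Longrightarrow> \<sigma> permutes {..<l} \<Longrightarrow> rev_perm l (\<sigma> j) = l - 1 - \<sigma> j"
  using permutes_in_image[of \<sigma> "{..<l}" j] by (auto simp: rev_perm_def)

lemma falling_fact_mat_column_ops:
  fixes x :: "nat \<Rightarrow> real"
  shows "mat n n (\<lambda>(i, j). falling_fact (x i) j)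
      * mat n n (\<lambda>(i, j). (if i = j then 1 else 0) + (if Suc i = j then - (x 0 - real i) else 0))
    = mat n n (\<lambda>(i, j). if j = 0 then 1 else falling_fact (x i) (j - 1) * (x i - x 0))"
proof (rule eq_matI)
  fix i j assume "i < dim_row (mat n n (\<lambda>(i, j). if j = 0 then 1 else falling_fact (x i) (j - 1) * (x i - x 0)))"
    "j < dim_col (mat n n (\<lambda>(i, j). if j = 0 then 1 else falling_fact (x i) (j - 1) * (x i - x 0)))"
  then have i: "i < n" and j: "j < n" by auto
  let ?c = "\<lambda>k. - (x 0 - real k)"
  have "(\<Sum>k<n. falling_fact (x i) k * ((if k = j then 1 else 0) + (if Suc k = j then ?c k else 0)))
      = (\<Sum>k<n. if k = j then falling_fact (x i) k else 0)
        + (\<Sum>k<n. if Suc k = j then falling_fact (x i) k * ?c k else 0)"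
    by (simp only: sum.distrib[symmetric]) (intro sum.cong refl, auto)
  also have "(\<Sum>k<n. if k = j then falling_fact (x i) k else 0) = falling_fact (x i) j"
    using j by simp
  also have "(\<Sum>k<n. if Suc k = j then falling_fact (x i) k * ?c k else 0)
      = (if j = 0 then 0 else falling_fact (x i) (j - 1) * ?c (j - 1))"
    using j by (cases j) (simp_all add: sum.delta')
  also have "falling_fact (x i) j + \<dots> = (if j = 0 then 1 else falling_fact (x i) (j - 1) * (x i - x 0))"
    by (cases j) (simp_all add: falling_fact_Suc algebra_simps)
  finally show "(mat n n (\<lambda>(i, j). falling_fact (x i) j)
      * mat n n (\<lambda>(i, j). (if i = j then 1 else 0) + (if Suc i = j then - (x 0 - real i) else 0))) $$ (i, j)
    = mat n n (\<lambda>(i, j). if j = 0 then 1 else falling_fact (x i) (j - 1) * (x i - x 0)) $$ (i, j)"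
    using i j by (simp add: scalar_prod_def atLeast0LessThan)
qed auto

lemma det_falling_fact_Vandermonde:
  "det (mat l l (\<lambda>(i, j). falling_fact (x i) j)) = (\<Prod>j<l. \<Prod>i<j. x j - x i)"
proof (induction l arbitrary: x)
  case 0
  then show ?case by (simp add: det_dim_zero)
next
  case (Suc l)
  define n where "n = Suc l"
  define A where "A = mat n n (\<lambda>(i, j). falling_fact (x i) j)"
  define E where "E = mat n n (\<lambda>(i, j). (if i = j then 1 else 0) + (if Suc i = j then - (x 0 - real i) else 0))"
  define B where "B = mat n n (\<lambda>(i, j). if j = 0 then 1 else falling_fact (x i) (j - 1) * (x i - x 0))"
  have carrier: "A \<in> carrier_mat n n" "E \<in> carrier_mat n n" "B \<in> carrier_mat n n"
    unfolding A_def E_def B_def by auto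
  have "det E = prod_list (diag_mat E)"
    using carrier(2) by (intro det_upper_triangular) (auto simp: E_def upper_triangular_def)
  also have "diag_mat E = map (\<lambda>i. 1) [0..<n]"
    unfolding diag_mat_def E_def by auto
  finally have "det E = 1"
    by (simp add: map_replicate_const)
  then have "det A = det B"
    using det_mult[OF carrier(1,2)] falling_fact_mat_column_ops[of n x] unfolding A_def E_def B_def by simp
  also have "det B = (\<Sum>j<n. B $$ (0, j) * cofactor B 0 j)"
    by (rule laplace_expansion_row[OF carrier(3)]) (simp add: n_def)
  also have "\<dots> = cofactor B 0 0"
    by (simp add: n_def B_def sum.lessThan_Suc_shift del: sum.lessThan_Suc)
  also have "\<dots> = (\<Prod>i<l. x (Suc i) - x 0) * det (mat l l (\<lambda>(i, j). falling_fact ((x \<circ> Suc) i) j))"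
  proof -
    define a where "a i = vec l (\<lambda>j. falling_fact (x (Suc i)) j)" for i
    have "mat_delete B 0 0 = mat\<^sub>r l l (\<lambda>i. (x (Suc i) - x 0) \<cdot>\<^sub>v a i)"
      by (rule eq_matI) (auto simp: mat_delete_def B_def n_def a_def mat_of_rows_def)
    moreover have "mat\<^sub>r l l a = mat l l (\<lambda>(i, j). falling_fact ((x \<circ> Suc) i) j)"
      by (rule eq_matI) (auto simp: a_def mat_of_rows_def)
    moreover have "a \<in> {0..<l} \<rightarrow> carrier_vec l"
      unfolding a_def by auto
    ultimately show ?thesis
      unfolding cofactor_def by (simp add: det_rows_mul atLeast0LessThan)
  qed
  also have "\<dots> = (\<Prod>j<Suc l. \<Prod>i<j. x j - x i)"
    unfolding Suc.IH prod.lessThan_Suc_shift by (simp add: prod.distrib)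
  finally show ?case
    unfolding A_def n_def .
qed

section \<open>The Wronskian, the character and the main theorem\<close>

lemma falling_fact_eq_fact_mult_inv_fact: "falling_fact (real m) d = fact m * inv_fact (int m - int d)"
  by (cases "d \<le> m") (simp_all add: inv_fact_def falling_fact_of_nat falling_fact_of_nat_eq_0 nat_diff_distrib')

lemma smult_falling_fact_He:
  "smult (falling_fact (real m) d) (He (m - d)) = smult (fact m) (if d \<le> m then He_div_fact (m - d) else 0)"
  by (cases "d \<le> m") (simp_all add: falling_fact_of_nat He_div_fact_def falling_fact_of_nat_eq_0)

lemma prod_higher_pderiv_He:
  "(\<Prod>j<l. (pderiv ^^ d j) (He (n j)))
    = smult (\<Prod>j<l. fact (n j)) (if \<forall>j<l. d j \<le> n j then He_prod l (\<lambda>j. n j - d j) else 0)"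
proof -
  have "(\<Prod>j<l. (pderiv ^^ d j) (He (n j)))
      = (\<Prod>j<l. smult (fact (n j)) (if d j \<le> n j then He_div_fact (n j - d j) else 0))"
    by (simp add: He_higher_pderiv smult_falling_fact_He)
  also have "\<dots> = smult (\<Prod>j<l. fact (n j)) (\<Prod>j<l. if d j \<le> n j then He_div_fact (n j - d j) else 0)"
    by (rule prod_smult)
  also have "(\<Prod>j<l. if d j \<le> n j then He_div_fact (n j - d j) else 0)
      = (if \<forall>j<l. d j \<le> n j then He_prod l (\<lambda>j. n j - d j) else 0)"
    unfolding He_prod_def by (auto intro: prod_zero)
  finally show ?thesis .
qed

definition alternant_sum :: "nat \<Rightarrow> (nat \<Rightarrow> nat) \<Rightarrow> ((nat \<Rightarrow> nat) \<Rightarrow> 'a :: comm_ring_1) \<Rightarrow> 'a" where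
  "alternant_sum l n F = (\<Sum>\<sigma> | \<sigma> permutes {..<l}. of_int (sign \<sigma>) *
     (if \<forall>j<l. l - 1 - \<sigma> j \<le> n j then F (\<lambda>j. n j - (l - 1 - \<sigma> j)) else 0))"

lemma alternant_sum_cong:
  assumes "\<And>m. (\<Sum>j<l. m j) + (\<Sum>j<l. l - 1 - j) = (\<Sum>j<l. n j) \<Longrightarrow> F m = G m"
  shows "alternant_sum l n F = alternant_sum l n G"
  unfolding alternant_sum_def
proof (rule sum.cong[OF refl])
  fix \<sigma> assume "\<sigma> \<in> {\<sigma>. \<sigma> permutes {..<l}}"
  then have \<sigma>: "\<sigma> permutes {..<l}" by simp
  show "of_int (sign \<sigma>) * (if \<forall>j<l. l - 1 - \<sigma> j \<le> n j then F (\<lambda>j. n j - (l - 1 - \<sigma> j)) else 0)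
      = of_int (sign \<sigma>) * (if \<forall>j<l. l - 1 - \<sigma> j \<le> n j then G (\<lambda>j. n j - (l - 1 - \<sigma> j)) else 0)"
  proof (cases "\<forall>j<l. l - 1 - \<sigma> j \<le> n j")
    case True
    have "(\<Sum>j<l. l - 1 - \<sigma> j) = (\<Sum>j<l. l - 1 - j)"
      using sum.permute[OF \<sigma>, of "\<lambda>j. l - 1 - j"] by (simp add: comp_def)
    moreover have "(\<Sum>j<l. n j - (l - 1 - \<sigma> j)) + (\<Sum>j<l. l - 1 - \<sigma> j) = (\<Sum>j<l. n j)"
      using True by (simp add: sum.distrib[symmetric])
    ultimately show ?thesis
      using True assms[of "\<lambda>j. n j - (l - 1 - \<sigma> j)"] by simp
  next
    case False
    then show ?thesis
      by (simp only: if_not_P[OF False] if_False)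
  qed
qed

lemma alternant_sum_mult_const: "alternant_sum l n (\<lambda>m. c * F m) = c * alternant_sum l n F"
  unfolding alternant_sum_def sum_distrib_left by (intro sum.cong refl) (auto simp: mult_ac)

lemma alternant_sum_zero: "alternant_sum l n (\<lambda>m. 0) = 0"
  using alternant_sum_mult_const[of l n 0 "\<lambda>m. 0"] by simp

lemma of_int_alternant_sum: "of_int (alternant_sum l n F) = alternant_sum l n (\<lambda>m. of_int (F m))"
  unfolding alternant_sum_def of_int_sum by (intro sum.cong refl) auto

lemma coeff_alternant_sum: "coeff (alternant_sum l n F) a = alternant_sum l n (\<lambda>m. coeff (F m) a)"
  unfolding alternant_sum_def coeff_sum by (intro sum.cong refl) (auto simp: of_int_poly)

lemma smult_sum_right: "smult c (\<Sum>x\<in>A. f x) = (\<Sum>x\<in>A. smult c (f x))"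
  by (induction A rule: infinite_finite_induct) (simp_all add: smult_add_right)

lemma wronskian_He:
  "wronskian (map (\<lambda>i. He (n i)) [0..<l])
    = smult (of_int (sign (rev_perm l)) * (\<Prod>j<l. fact (n j))) (alternant_sum l n (He_prod l))"
proof -
  let ?ok = "\<lambda>\<sigma>. \<forall>j<l. l - 1 - \<sigma> j \<le> n j"
  have "wronskian (map (\<lambda>i. He (n i)) [0..<l])
      = (\<Sum>p | p permutes {..<l}. of_int (sign p) * (\<Prod>j<l. (pderiv ^^ p j) (He (n j))))"
    unfolding wronskian_def det_mat_leibniz_columns
    by (intro sum.cong refl arg_cong2[where f = "(*)"] prod.cong) auto
  also have "\<dots> = of_int (sign (rev_perm l)) * (\<Sum>\<sigma> | \<sigma> permutes {..<l}.
      of_int (sign \<sigma>) * (\<Prod>j<l. (pderiv ^^ rev_perm l (\<sigma> j)) (He (n j))))"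
    by (subst sum_permutes_rev_perm_comp) simp
  also have "\<dots> = of_int (sign (rev_perm l)) * (\<Sum>\<sigma> | \<sigma> permutes {..<l}.
      of_int (sign \<sigma>) * smult (\<Prod>j<l. fact (n j))
        (if ?ok \<sigma> then He_prod l (\<lambda>j. n j - (l - 1 - \<sigma> j)) else 0))"
  proof (intro sum.cong refl arg_cong2[where f = "(*)"])
    fix \<sigma> assume "\<sigma> \<in> {\<sigma>. \<sigma> permutes {..<l}}"
    then have "(\<Prod>j<l. (pderiv ^^ rev_perm l (\<sigma> j)) (He (n j)))
        = (\<Prod>j<l. (pderiv ^^ (l - 1 - \<sigma> j)) (He (n j)))"
      by (intro prod.cong refl) (simp add: rev_perm_permutes_apply)
    also have "\<dots> = smult (\<Prod>j<l. fact (n j)) (if ?ok \<sigma> then He_prod l (\<lambda>j. n j - (l - 1 - \<sigma> j)) else 0)"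
      by (rule prod_higher_pderiv_He)
    finally show "(\<Prod>j<l. (pderiv ^^ rev_perm l (\<sigma> j)) (He (n j)))
        = smult (\<Prod>j<l. fact (n j)) (if ?ok \<sigma> then He_prod l (\<lambda>j. n j - (l - 1 - \<sigma> j)) else 0)" .
  qed
  also have "\<dots> = smult (of_int (sign (rev_perm l)) * (\<Prod>j<l. fact (n j))) (alternant_sum l n (He_prod l))"
    by (simp add: alternant_sum_def of_int_poly smult_sum_right mult_ac)
  finally show ?thesis .
qed

lemma prod_diff_eq_inv_fact_det:
  "real_of_int (\<Prod>j<l. \<Prod>i<j. int (n j) - int (n i))
    = of_int (sign (rev_perm l)) * (\<Prod>j<l. fact (n j)) * inv_fact_det l (\<lambda>i. int (n i))"
proof -
  have "real_of_int (\<Prod>j<l. \<Prod>i<j. int (n j) - int (n i)) = det (mat l l (\<lambda>(i, j). falling_fact (real (n i)) j))"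
    by (simp add: det_falling_fact_Vandermonde)
  also have "\<dots> = (\<Sum>p | p permutes {..<l}. of_int (sign p) * (\<Prod>i<l. falling_fact (real (n i)) (p i)))"
    by (simp add: det_mat_leibniz)
  also have "\<dots> = of_int (sign (rev_perm l)) * (\<Sum>\<sigma> | \<sigma> permutes {..<l}.
      of_int (sign \<sigma>) * (\<Prod>i<l. falling_fact (real (n i)) (rev_perm l (\<sigma> i))))"
    by (subst sum_permutes_rev_perm_comp) simp
  also have "(\<Sum>\<sigma> | \<sigma> permutes {..<l}. of_int (sign \<sigma>) * (\<Prod>i<l. falling_fact (real (n i)) (rev_perm l (\<sigma> i))))
      = (\<Prod>j<l. fact (n j)) * inv_fact_det l (\<lambda>i. int (n i))"
    unfolding inv_fact_det_def sum_distrib_left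
  proof (intro sum.cong refl)
    fix \<sigma> assume "\<sigma> \<in> {\<sigma>. \<sigma> permutes {..<l}}"
    then have "(\<Prod>i<l. falling_fact (real (n i)) (rev_perm l (\<sigma> i)))
        = (\<Prod>i<l. fact (n i) * inv_fact (int (n i) - int (l - 1 - \<sigma> i)))"
      by (intro prod.cong refl) (simp add: rev_perm_permutes_apply falling_fact_eq_fact_mult_inv_fact)
    then show "of_int (sign \<sigma>) * (\<Prod>i<l. falling_fact (real (n i)) (rev_perm l (\<sigma> i)))
        = (\<Prod>j<l. fact (n j)) * (real_of_int (sign \<sigma>) * (\<Prod>i<l. inv_fact (int (n i) - int (l - 1 - \<sigma> i))))"
      by (simp add: prod.distrib)
  qed
  finally show ?thesis
    by simp
qed

lemma degvec_strict_antimono: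
  assumes "sorted_wrt (\<ge>) lam" "i < j" "j < length lam"
  shows "degvec lam j < degvec lam i"
  using sorted_wrt_ge_nth[OF assms(1), of i j] assms unfolding degvec_def by simp

lemma num_SYT_smult_He_part:
  assumes sorted: "sorted_wrt (\<ge>) lam"
  shows "smult (real (num_SYT lam)) (He_part lam)
    = smult (fact (psize lam)) (alternant_sum (length lam) (degvec lam) (He_prod (length lam)))"
proof -
  define c where "c = real_of_int (sign (rev_perm (length lam))) * (\<Prod>j<length lam. fact (degvec lam j))"
  define W where "W = inv_fact_det (length lam) (\<lambda>i. int (degvec lam i))"
  have Delta: "real_of_int (Delta lam) = c * W"
    unfolding Delta_def c_def W_def by (rule prod_diff_eq_inv_fact_det)
  have "Delta lam \<noteq> 0"
    unfolding Delta_def using degvec_strict_antimono[OF sorted] by (simp add: less_imp_neq)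
  then have "c * W \<noteq> 0"
    unfolding Delta[symmetric] by simp
  moreover have "real (num_SYT lam) = fact (psize lam) * W"
    unfolding W_def by (rule num_SYT_eq_inv_fact_det[OF sorted])
  ultimately have "real (num_SYT lam) * (1 / real_of_int (Delta lam) * c) = fact (psize lam)"
    unfolding Delta by (simp add: field_simps)
  then show ?thesis
    unfolding He_part_def wronskian_He c_def[symmetric] by (simp add: mult.assoc)
qed

lemma sym_char_eq_alternant_sum:
  "sym_char lam mu = alternant_sum (length lam) (degvec lam) (\<lambda>m. int (count_fillings (length lam) mu m))"
proof -
  define l where "l = length lam"
  have degvec: "degvec lam i = lam ! i + (l - 1 - i)" if "i < l" for i
    using that unfolding degvec_def l_def by simp
  have "int (card {f \<in> {..<length mu} \<rightarrow>\<^sub>E {..<l}.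
          \<forall>i<l. (l - 1 - \<sigma> i) + (\<Sum>k | k < length mu \<and> f k = i. mu ! k) = lam ! i + (l - 1 - i)})
      = (if \<forall>j<l. l - 1 - \<sigma> j \<le> degvec lam j
         then int (count_fillings l mu (\<lambda>j. degvec lam j - (l - 1 - \<sigma> j))) else 0)"
    (is "int (card ?S) = _") for \<sigma>
  proof (cases "\<forall>j<l. l - 1 - \<sigma> j \<le> degvec lam j")
    case True
    then have "?S = {f \<in> {..<length mu} \<rightarrow>\<^sub>E {..<l}. \<forall>i<l. row_sum f mu i = degvec lam i - (l - 1 - \<sigma> i)}"
      using degvec unfolding row_sum_def by force
    then show ?thesis
      unfolding count_fillings_def if_P[OF True] by (simp only:)
  next
    case False
    then obtain j where "j < l" "\<not> l - 1 - \<sigma> j \<le> degvec lam j" by blast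
    then have "?S = {}"
      using degvec[of j] by force
    show ?thesis
      unfolding \<open>?S = {}\<close> if_not_P[OF False] by simp
  qed
  then show ?thesis
    unfolding sym_char_def alternant_sum_def l_def[symmetric] Let_def by simp
qed

lemma coeff_alternant_sum_He_prod:
  fixes lam :: "nat list"
  defines "N \<equiv> psize lam"
  shows "coeff (alternant_sum (length lam) (degvec lam) (He_prod (length lam))) a =
    (if a \<le> N \<and> even (N - a)
     then (-1/2) ^ ((N - a) div 2) / (fact a * fact ((N - a) div 2))
          * real_of_int (sym_char lam (cyc_type_2_1 N ((N - a) div 2)))
     else 0)"
proof -
  let ?l = "length lam" and ?b = "(N - a) div 2"
  let ?c = "(-1/2) ^ ?b / (fact a * fact ?b) :: real"
  have "(\<Sum>j<?l. degvec lam j) = N + (\<Sum>j<?l. ?l - 1 - j)"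
    unfolding N_def by (rule sum_degvec)
  then have size: "(\<Sum>j<?l. m j) = N" if "(\<Sum>j<?l. m j) + (\<Sum>j<?l. ?l - 1 - j) = (\<Sum>j<?l. degvec lam j)" for m
    using that by simp
  have "coeff (alternant_sum ?l (degvec lam) (He_prod ?l)) a
      = alternant_sum ?l (degvec lam) (\<lambda>m. if a \<le> N \<and> even (N - a)
          then ?c * real (count_fillings ?l (cyc_type_2_1 N ?b) m) else 0)"
    unfolding coeff_alternant_sum
    by (rule alternant_sum_cong) (auto simp: coeff_He_prod[OF size] cyc_type_2_1_def elim!: evenE)
  also have "\<dots> = (if a \<le> N \<and> even (N - a) then ?c * real_of_int (sym_char lam (cyc_type_2_1 N ?b)) else 0)"
  proof (cases "a \<le> N \<and> even (N - a)")
    case True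
    then show ?thesis
      unfolding if_P[OF True] alternant_sum_mult_const sym_char_eq_alternant_sum of_int_alternant_sum by simp
  next
    case False
    show ?thesis
      unfolding if_not_P[OF False] by (rule alternant_sum_zero)
  qed
  finally show ?thesis .
qed

lemma coeff_sum_monom_complements:
  "coeff (\<Sum>j = 0..N div 2. monom (c j) (N - 2 * j)) a = (if a \<le> N \<and> even (N - a) then c ((N - a) div 2) else 0)"
proof -
  have "coeff (\<Sum>j = 0..N div 2. monom (c j) (N - 2 * j)) a = (\<Sum>j = 0..N div 2. if N - 2 * j = a then c j else 0)"
    by (simp add: coeff_sum coeff_monom)
  also have "\<dots> = (if a \<le> N \<and> even (N - a) then c ((N - a) div 2) else 0)"
  proof (cases "a \<le> N \<and> even (N - a)")
    case True
    then have "N - 2 * j = a \<longleftrightarrow> j = (N - a) div 2" if "j \<in> {0..N div 2}" for j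
      using that by auto
    then have "(\<Sum>j = 0..N div 2. if N - 2 * j = a then c j else 0)
        = (\<Sum>j = 0..N div 2. if j = (N - a) div 2 then c j else 0)"
      by (intro sum.cong) auto
    also have "\<dots> = c ((N - a) div 2)"
      by (simp add: sum.delta' div_le_mono)
    finally show ?thesis
      unfolding if_P[OF True] .
  next
    case False
    then have "N - 2 * j \<noteq> a" if "j \<in> {0..N div 2}" for j
      using that by auto
    then show ?thesis
      unfolding if_not_P[OF False] by (intro sum.neutral) simp
  qed
  finally show ?thesis .
qed

theorem theorem4p2:
  fixes lam :: "nat list"
  assumes "is_partition lam"
  shows "smult (real (num_SYT lam)) (He_part lam) =
    (\<Sum>j = 0..psize lam div 2.
       monom ((-1) ^ j * fact (psize lam) / (fact j * fact (psize lam - 2 * j) * 2 ^ j)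
              * real_of_int (sym_char lam (cyc_type_2_1 (psize lam) j)))
             (psize lam - 2 * j))"
proof (rule poly_eqI)
  fix a
  define N where "N = psize lam"
  define b where "b = (N - a) div 2"
  have sorted: "sorted_wrt (\<ge>) lam"
    using assms unfolding is_partition_def by simp
  have "coeff (smult (real (num_SYT lam)) (He_part lam)) a
      = fact N * (if a \<le> N \<and> even (N - a)
          then (-1/2) ^ b / (fact a * fact b) * real_of_int (sym_char lam (cyc_type_2_1 N b)) else 0)"
    unfolding num_SYT_smult_He_part[OF sorted] coeff_smult coeff_alternant_sum_He_prod N_def b_def ..
  moreover have "coeff (\<Sum>j = 0..psize lam div 2.
       monom ((-1) ^ j * fact (psize lam) / (fact j * fact (psize lam - 2 * j) * 2 ^ j)
              * real_of_int (sym_char lam (cyc_type_2_1 (psize lam) j))) (psize lam - 2 * j)) a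
      = (if a \<le> N \<and> even (N - a)
          then (-1) ^ b * fact N / (fact b * fact (N - 2 * b) * 2 ^ b) * real_of_int (sym_char lam (cyc_type_2_1 N b))
          else 0)"
    unfolding coeff_sum_monom_complements N_def b_def ..
  moreover have "(fact N :: real) * ((-1/2) ^ b / (fact a * fact b)) = (-1) ^ b * fact N / (fact b * fact (N - 2 * b) * 2 ^ b)"
    if "a \<le> N \<and> even (N - a)"
  proof -
    have "N - 2 * b = a"
      using that unfolding b_def by auto
    moreover have "(-1/2 :: real) ^ b = (-1) ^ b / 2 ^ b"
      by (metis power_divide)
    ultimately show ?thesis
      by (simp add: field_simps)
  qed
  ultimately show "coeff (smult (real (num_SYT lam)) (He_part lam)) a = coeff (\<Sum>j = 0..psize lam div 2.
       monom ((-1) ^ j * fact (psize lam) / (fact j * fact (psize lam - 2 * j) * 2 ^ j)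
              * real_of_int (sym_char lam (cyc_type_2_1 (psize lam) j))) (psize lam - 2 * j)) a"
    by (cases "a \<le> N \<and> even (N - a)") (simp_all only: if_True if_False simp_thms mult_zero_right mult.assoc[symmetric])
qed

end
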